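(* Consider optimal control problem OCP-2 (described in the context). The optimal control $u_*^2$ (given pointwise by maximization of the Hamiltonian along the optimal trajectory and adjoint function) is a continuous function on the interval $[0,T]$.
   Context: Parameters: $\beta_1,\beta_2,\gamma,\rho_1,\rho_2>0$; $\sigma_1,\sigma_2>0$ with $\sigma_1+\sigma_2=1$; $q\in[0,1]$; $0\le u_{\max}<1$; weights $\alpha_1,\alpha_2\ge0$, $\alpha_3>0$; horizon $T>0$; initial values $s_0,e_0,i_0,j_0>0$ with $s_0+e_0+i_0+j_0\le1$. Admissible controls: Lebesgue measurable $u:[0,T]\to[0,u_{\max}]$. State system: $s'=-sn^{-1}(\beta_1(1-u)i+\beta_2j)$, $e'=sn^{-1}(\beta_1(1-u)i+\beta_2j)-\gamma e$, $i'=\sigma_1\gamma e-\rho_1 i$, $j'=\sigma_2\gamma e-\rho_2 j$, $n'=-q\rho_2 j$, with $s(0)=s_0,e(0)=e_0,i(0)=i_0,j(0)=j_0,n(0)=1$. OCP-2 is the problem of minimizing $Q(u)=\alpha_1(e(T)+i(T)+j(T))+\alpha_2\int_0^T(e+i+j)\,dt+0.5\alpha_3\int_0^Tu^2\,dt$ over admissible controls. Hamiltonian: $H(s,e,i,j,n,\phi_1,\dots,\phi_5,u)=-sn^{-1}(\beta_1(1-u)i+\beta_2j)(\phi_1-\phi_2)-\gamma e(\phi_2-\sigma_1\phi_3-\sigma_2\phi_4)-\rho_1 i\phi_3-\rho_2 j(\phi_4+q\phi_5)-\alpha_2(e+i+j)-0.5\alpha_3u^2$. For an optimal control $u_*^2$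 with optimal trajectory $(s_*^2,e_*^2,i_*^2,j_*^2,n_*^2)$, the adjoint function $\phi_*=(\phi_1^*,\dots,\phi_5^* )$ of the Pontryagin maximum principle is a nontrivial solution of (with $s,i,j,n,u$ denoting the optimal ones) $\phi_1'=n^{-1}(\beta_1(1-u)i+\beta_2j)(\phi_1-\phi_2)$, $\phi_2'=\gamma(\phi_2-\sigma_1\phi_3-\sigma_2\phi_4)+\alpha_2$, $\phi_3'=\beta_1(1-u)sn^{-1}(\phi_1-\phi_2)+\rho_1\phi_3+\alpha_2$, $\phi_4'=\beta_2sn^{-1}(\phi_1-\phi_2)+\rho_2(\phi_4+q\phi_5)+\alpha_2$, $\phi_5'=-sn^{-2}(\beta_1(1-u)i+\beta_2j)(\phi_1-\phi_2)$, with $\phi_1(T)=0$, $\phi_2(T)=\phi_3(T)=\phi_4(T)=-\alpha_1$, $\phi_5(T)=0$, and $u_*^2(t)$ maximizes $H(s_*^2(t),e_*^2(t),i_*^2(t),j_*^2(t),n_*^2(t),\phi_*(t),u)$ over $u\in[0,u_{\max}]$. *)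

theory Defs
  imports "HOL-Analysis.Analysis"
begin

text \<open>Model parameters: b1 b2 (beta_1, beta_2), g (gamma), r1 r2 (rho_1, rho_2),
  sg1 sg2 (sigma_1, sigma_2), q.  Time functions are real \<Rightarrow> real; only their
  values on [0,T] matter.\<close>

definition admissible :: "real \<Rightarrow> real \<Rightarrow> (real \<Rightarrow> real) \<Rightarrow> bool" where
  "admissible umax T u \<longleftrightarrow> u measurable_on {0..T} \<and> (\<forall>t\<in>{0..T}. 0 \<le> u t \<and> u t \<le> umax)"

definition force :: "real \<Rightarrow> real \<Rightarrow> real \<Rightarrow> real \<Rightarrow> real \<Rightarrow> real \<Rightarrow> real \<Rightarrow> real" where
  "force b1 b2 s i j n u = s / n * (b1 * (1 - u) * i + b2 * j)"

text \<open>(s,e,i,j,n) is a (Caratheodory, i.e. absolutely continuous) solution of the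
  state system on [0,T] driven by the control u, written in integral form.\<close>
definition state_sol ::
  "real \<Rightarrow> real \<Rightarrow> real \<Rightarrow> real \<Rightarrow> real \<Rightarrow> real \<Rightarrow> real \<Rightarrow> real \<Rightarrow>
   real \<Rightarrow> real \<Rightarrow> real \<Rightarrow> real \<Rightarrow> real \<Rightarrow> (real \<Rightarrow> real) \<Rightarrow>
   (real \<Rightarrow> real) \<Rightarrow> (real \<Rightarrow> real) \<Rightarrow> (real \<Rightarrow> real) \<Rightarrow> (real \<Rightarrow> real) \<Rightarrow> (real \<Rightarrow> real) \<Rightarrow> bool" where
  "state_sol b1 b2 g r1 r2 sg1 sg2 q s0 e0 i0 j0 T u s e i j n \<longleftrightarrow>
     (\<lambda>t. force b1 b2 (s t) (i t) (j t) (n t) (u t)) integrable_on {0..T} \<and>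
     (\<lambda>t. e t) integrable_on {0..T} \<and> (\<lambda>t. i t) integrable_on {0..T} \<and>
     (\<lambda>t. j t) integrable_on {0..T} \<and>
     (\<forall>t\<in>{0..T}.
        s t = s0 + integral {0..t} (\<lambda>\<tau>. - force b1 b2 (s \<tau>) (i \<tau>) (j \<tau>) (n \<tau>) (u \<tau>)) \<and>
        e t = e0 + integral {0..t} (\<lambda>\<tau>. force b1 b2 (s \<tau>) (i \<tau>) (j \<tau>) (n \<tau>) (u \<tau>) - g * e \<tau>) \<and>
        i t = i0 + integral {0..t} (\<lambda>\<tau>. sg1 * g * e \<tau> - r1 * i \<tau>) \<and>
        j t = j0 + integral {0..t} (\<lambda>\<tau>. sg2 * g * e \<tau> - r2 * j \<tau>) \<and>
        n t = 1 + integral {0..t} (\<lambda>\<tau>. - q * r2 * j \<tau>))"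

definition cost ::
  "real \<Rightarrow> real \<Rightarrow> real \<Rightarrow> real \<Rightarrow> (real \<Rightarrow> real) \<Rightarrow>
   (real \<Rightarrow> real) \<Rightarrow> (real \<Rightarrow> real) \<Rightarrow> (real \<Rightarrow> real) \<Rightarrow> real" where
  "cost a1 a2 a3 T u e i j =
     a1 * (e T + i T + j T) + a2 * integral {0..T} (\<lambda>t. e t + i t + j t)
     + 0.5 * a3 * integral {0..T} (\<lambda>t. (u t)\<^sup>2)"

definition Ham ::
  "real \<Rightarrow> real \<Rightarrow> real \<Rightarrow> real \<Rightarrow> real \<Rightarrow> real \<Rightarrow> real \<Rightarrow> real \<Rightarrow> real \<Rightarrow> real \<Rightarrow>
   real \<Rightarrow> real \<Rightarrow> real \<Rightarrow> real \<Rightarrow> real \<Rightarrow>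
   real \<Rightarrow> real \<Rightarrow> real \<Rightarrow> real \<Rightarrow> real \<Rightarrow> real \<Rightarrow> real" where
  "Ham b1 b2 g r1 r2 sg1 sg2 q a2 a3 s e i j n p1 p2 p3 p4 p5 u =
     - s / n * (b1 * (1 - u) * i + b2 * j) * (p1 - p2)
     - g * e * (p2 - sg1 * p3 - sg2 * p4) - r1 * i * p3 - r2 * j * (p4 + q * p5)
     - a2 * (e + i + j) - 0.5 * a3 * u\<^sup>2"

definition adjoint_sol ::
  "real \<Rightarrow> real \<Rightarrow> real \<Rightarrow> real \<Rightarrow> real \<Rightarrow> real \<Rightarrow> real \<Rightarrow> real \<Rightarrow>
   real \<Rightarrow> real \<Rightarrow> real \<Rightarrow> (real \<Rightarrow> real) \<Rightarrow>
   (real \<Rightarrow> real) \<Rightarrow> (real \<Rightarrow> real) \<Rightarrow> (real \<Rightarrow> real) \<Rightarrow> (real \<Rightarrow> real) \<Rightarrow>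
   (real \<Rightarrow> real) \<Rightarrow> (real \<Rightarrow> real) \<Rightarrow> (real \<Rightarrow> real) \<Rightarrow> (real \<Rightarrow> real) \<Rightarrow> (real \<Rightarrow> real) \<Rightarrow> bool" where
  "adjoint_sol b1 b2 g r1 r2 sg1 sg2 q a1 a2 T u s i j n p1 p2 p3 p4 p5 \<longleftrightarrow>
     (let d1 = (\<lambda>t. (b1 * (1 - u t) * i t + b2 * j t) / n t * (p1 t - p2 t));
          d2 = (\<lambda>t. g * (p2 t - sg1 * p3 t - sg2 * p4 t) + a2);
          d3 = (\<lambda>t. b1 * (1 - u t) * s t / n t * (p1 t - p2 t) + r1 * p3 t + a2);
          d4 = (\<lambda>t. b2 * s t / n t * (p1 t - p2 t) + r2 * (p4 t + q * p5 t) + a2);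
          d5 = (\<lambda>t. - s t / (n t)\<^sup>2 * (b1 * (1 - u t) * i t + b2 * j t) * (p1 t - p2 t))
      in d1 integrable_on {0..T} \<and> d2 integrable_on {0..T} \<and> d3 integrable_on {0..T} \<and>
         d4 integrable_on {0..T} \<and> d5 integrable_on {0..T} \<and>
         (\<forall>t\<in>{0..T}.
            p1 t = 0 - integral {t..T} d1 \<and>
            p2 t = - a1 - integral {t..T} d2 \<and>
            p3 t = - a1 - integral {t..T} d3 \<and>
            p4 t = - a1 - integral {t..T} d4 \<and>
            p5 t = 0 - integral {t..T} d5))"

end

(* The Hamiltonian is a concave quadratic in u, so the maximum condition forces
   u = max 0 (min umax (c / a3)) with c = s n^-1 b1 i (phi1 - phi2).  States and adjoints are
   indefinite integrals, hence continuous, so u is continuous once n has no zero on [0,T].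
   This follows from positivity of all states, proved at the first time one of them would
   vanish: there each of s, e, i, j satisfies y' >= -K y on a left neighbourhood, which keeps it
   positive, and n = 1 - q N(0) + q N + q rho1 int i (N = s + e + i + j) is positive because i is. *)

theory Submission
  imports Defs
begin

definition integral_curve :: "real \<Rightarrow> real \<Rightarrow> (real \<Rightarrow> real) \<Rightarrow> (real \<Rightarrow> real) \<Rightarrow> bool" where
  "integral_curve T y0 f y \<longleftrightarrow>
     f integrable_on {0..T} \<and> (\<forall>t\<in>{0..T}. y t = y0 + integral {0..t} f)"

lemma integral_curve_continuous_on:
  assumes "integral_curve T y0 f y"
  shows "continuous_on {0..T} y"
proof -
  have "continuous_on {0..T} (\<lambda>t. y0 + integral {0..t} f)"
    using assms unfolding integral_curve_def
    by (intro continuous_on_add continuous_on_const indefinite_integral_continuous_1) auto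
  then show ?thesis
    by (rule continuous_on_eq) (use assms in \<open>auto simp: integral_curve_def\<close>)
qed

lemma integral_curve_integrable_on:
  assumes "integral_curve T y0 f y" "0 \<le> c" "d \<le> T"
  shows "f integrable_on {c..d}"
proof -
  have "f integrable_on {0..T}" using assms(1) by (simp add: integral_curve_def)
  then show ?thesis by (rule integrable_on_subinterval) (use assms in auto)
qed

lemma integral_curve_increment:
  assumes y: "integral_curve T y0 f y" and "0 \<le> t" "t \<le> b" "b \<le> T"
  shows "y b - y t = integral {t..b} f"
proof -
  have "f integrable_on {0..b}" using integral_curve_integrable_on[OF y] assms by simp
  from Henstock_Kurzweil_Integration.integral_combine[OF assms(2,3) this] show ?thesis
    using assms by (auto simp: integral_curve_def)
qed

lemma integral_curve_pos_short_interval: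
  assumes y: "integral_curve T y0 f y"
    and ab: "0 \<le> a" "a < b" "b \<le> T" and ya: "0 < y a"
    and K: "0 \<le> K" "(b - a) * K \<le> 1/2"
    and f_ge: "\<And>x. x \<in> {a..b} \<Longrightarrow> - K * y x \<le> f x"
  shows "0 < y b"
proof -
  have yc: "continuous_on {a..b} y"
    using ab by (intro continuous_on_subset[OF integral_curve_continuous_on[OF y]]) auto
  \<comment> \<open>Comparing with the maximum y t of y on [a,b] replaces Gronwall's lemma:
    y b \<ge> y t - K (b - t) y t \<ge> y t / 2.\<close>
  obtain t where t: "t \<in> {a..b}" and t_max: "\<And>x. x \<in> {a..b} \<Longrightarrow> y x \<le> y t"
    using continuous_attains_sup[OF compact_Icc _ yc] ab by fastforce
  have "y a \<le> y t" using t_max ab by simp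
  have f_int: "f integrable_on {t..b}"
    using integral_curve_integrable_on[OF y] t ab by simp
  have y_int: "y integrable_on {t..b}"
    using t by (intro integrable_continuous_interval continuous_on_subset[OF yc]) auto
  have "integral {t..b} y \<le> integral {t..b} (\<lambda>_. y t)"
    using y_int t t_max by (intro integral_le) auto
  then have "- K * ((b - t) * y t) \<le> - K * integral {t..b} y"
    using t K by (simp add: mult_left_mono)
  also have "\<dots> = integral {t..b} (\<lambda>x. - K * y x)" by simp
  also have "\<dots> \<le> integral {t..b} f"
    using f_ge t f_int integrable_neg[OF integrable_on_mult_right[OF y_int, of K]]
    by (intro integral_le) auto
  also have "\<dots> = y b - y t" using integral_curve_increment[OF y] t ab by auto
  finally have "y t - ((b - t) * K) * y t \<le> y b" by (simp add: algebra_simps)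
  moreover have "((b - t) * K) * y t \<le> 1/2 * y t"
  proof (rule mult_right_mono)
    have "(b - t) * K \<le> (b - a) * K" using K t by (intro mult_right_mono) auto
    then show "(b - t) * K \<le> 1/2" using K by linarith
  qed (use \<open>y a \<le> y t\<close> ya in auto)
  ultimately show ?thesis using ya \<open>y a \<le> y t\<close> by linarith
qed

lemma integral_curve_pos_at_end:
  assumes y: "integral_curve T y0 f y"
    and \<tau>: "0 < \<tau>" "\<tau> \<le> T" and before: "\<And>x. x \<in> {0..<\<tau>} \<Longrightarrow> 0 < y x"
    and K: "0 \<le> K" and d: "0 < d"
    and f_ge: "\<And>x. x \<in> {0..\<tau>} \<Longrightarrow> \<tau> - x < d \<Longrightarrow> - K * y x \<le> f x"
  shows "0 < y \<tau>"
proof -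
  define h where "h = min (d/2) (1 / (2 * K + 2))"
  define a where "a = max 0 (\<tau> - h)"
  have h: "0 < h" "h < d" using d K by (auto simp: h_def)
  have "h * K \<le> K / (2 * K + 2)"
    using K mult_right_mono[of h "1 / (2 * K + 2)" K] by (simp add: h_def)
  also have "\<dots> \<le> 1/2" using K by (simp add: field_simps)
  finally have hK: "h * K \<le> 1/2" .
  have a: "0 \<le> a" "a < \<tau>" "\<tau> - a \<le> h" using \<tau> h by (auto simp: a_def)
  have "(\<tau> - a) * K \<le> 1/2" using mult_right_mono[OF a(3) K] hK by linarith
  then show ?thesis
    using integral_curve_pos_short_interval[OF y a(1,2) \<tau>(2) before K] a h f_ge by auto
qed

lemma nonneg_at_right_end:
  fixes y :: "real \<Rightarrow> real"
  assumes "continuous_on {a..b} y" "a < b" "\<And>x. x \<in> {a..<b} \<Longrightarrow> 0 < y x"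
  shows "0 \<le> y b"
  using continuous_ge_on_closure[of "{a..<b}" y b 0] assms by (auto simp: less_imp_le)

lemma pos_on_interval_first_exit:
  fixes m :: "real \<Rightarrow> real"
  assumes m: "continuous_on {0..T} m" and "0 < m 0"
    and step: "\<And>\<tau>. 0 < \<tau> \<Longrightarrow> \<tau> \<le> T \<Longrightarrow> (\<And>x. x \<in> {0..<\<tau>} \<Longrightarrow> 0 < m x) \<Longrightarrow> 0 < m \<tau>"
    and t: "t \<in> {0..T}"
  shows "0 < m t"
proof (rule ccontr)
  assume "\<not> 0 < m t"
  define Z where "Z = {0..T} \<inter> m -` {..0}"
  have "Z \<noteq> {}" using t \<open>\<not> 0 < m t\<close> by (auto simp: Z_def)
  moreover have "bdd_below Z" by (auto simp: Z_def intro: bdd_belowI[of _ 0])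
  moreover have "closed Z" unfolding Z_def by (intro continuous_closed_preimage m) auto
  ultimately have "Inf Z \<in> Z" by (rule closed_contains_Inf)
  have "0 < m x" if "x \<in> {0..<Inf Z}" for x
    using that cInf_lower[OF _ \<open>bdd_below Z\<close>, of x] \<open>Inf Z \<in> Z\<close> by (force simp: Z_def)
  moreover have "0 < Inf Z" using \<open>Inf Z \<in> Z\<close> \<open>0 < m 0\<close> by (auto simp: Z_def less_eq_real_def)
  ultimately have "0 < m (Inf Z)" using step \<open>Inf Z \<in> Z\<close> by (auto simp: Z_def)
  then show False using \<open>Inf Z \<in> Z\<close> by (auto simp: Z_def)
qed

lemma concave_quadratic_argmax:
  fixes a c umax w :: real
  assumes a: "0 < a" and "0 \<le> umax" and w: "w \<in> {0..umax}"
    and max: "\<And>v. v \<in> {0..umax} \<Longrightarrow> v * c - a / 2 * v\<^sup>2 \<le> w * c - a / 2 * w\<^sup>2"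
  shows "w = max 0 (min umax (c / a))"
proof -
  define w0 where "w0 = max 0 (min umax (c / a))"
  have "w0 \<in> {0..umax}" using \<open>0 \<le> umax\<close> by (auto simp: w0_def)
  have projection: "(w - w0) * (c - a * w0) \<le> 0"
  proof (cases "c / a \<le> 0")
    case True
    then have "w0 = 0" unfolding w0_def by linarith
    moreover have "c \<le> 0" using True a by (simp add: divide_le_0_iff)
    ultimately show ?thesis using w by (simp add: mult_nonneg_nonpos)
  next
    case False
    show ?thesis
    proof (cases "umax \<le> c / a")
      case True
      then have "w0 = umax" "a * umax \<le> c"
        using a \<open>0 \<le> umax\<close> by (auto simp: w0_def pos_le_divide_eq mult.commute)
      then show ?thesis using w by (simp add: mult_nonpos_nonneg)
    next
      case False
      then have "w0 = c / a" using \<open>\<not> c / a \<le> 0\<close> by (auto simp: w0_def)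
      then show ?thesis using a by simp
    qed
  qed
  have "w * c - a / 2 * w\<^sup>2 - (w0 * c - a / 2 * w0\<^sup>2)
      = (w - w0) * (c - a * w0) - a / 2 * (w - w0)\<^sup>2"
    by (simp add: algebra_simps power2_eq_square)
  then have "a / 2 * (w - w0)\<^sup>2 \<le> 0" using max[OF \<open>w0 \<in> {0..umax}\<close>] projection by linarith
  then have "(w - w0)\<^sup>2 = 0" using a by (simp add: mult_le_0_iff)
  then show ?thesis by (simp add: w0_def)
qed

lemma force_nonneg:
  assumes "0 \<le> b1" "0 \<le> b2" "0 \<le> s" "0 \<le> i" "0 \<le> j" "0 \<le> n" "u \<le> 1"
  shows "0 \<le> force b1 b2 s i j n u"
  using assms unfolding force_def by (intro mult_nonneg_nonneg divide_nonneg_nonneg add_nonneg_nonneg) auto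

lemma force_le:
  assumes "0 \<le> b1" "0 \<le> b2" "0 \<le> s" "0 \<le> i" "0 \<le> j" "0 \<le> u" "u \<le> 1" "0 < c" "c \<le> n"
  shows "force b1 b2 s i j n u \<le> s / c * (b1 * i + b2 * j)"
proof -
  have "b1 * (1 - u) * i \<le> b1 * i"
    using assms mult_right_mono[of "b1 * (1 - u)" b1 i] by (simp add: mult_left_le)
  then have "b1 * (1 - u) * i + b2 * j \<le> b1 * i + b2 * j" by simp
  moreover have "s / n \<le> s / c" using assms by (intro divide_left_mono) auto
  moreover have "0 \<le> b1 * (1 - u) * i + b2 * j" using assms by simp
  ultimately show ?thesis
    unfolding force_def using assms by (intro mult_mono) auto
qed

lemma continuous_on_backward_integral:
  fixes f y :: "real \<Rightarrow> real"
  assumes "f integrable_on {0..T}" "\<And>t. t \<in> {0..T} \<Longrightarrow> y t = y1 - integral {t..T} f"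
  shows "continuous_on {0..T} y"
proof -
  have "continuous_on {0..T} (\<lambda>t. y1 - integral {t..T} f)"
    by (intro continuous_on_diff continuous_on_const indefinite_integral_continuous_1' assms(1))
  then show ?thesis by (rule continuous_on_eq) (use assms(2) in auto)
qed

lemma adjoint_sol_continuous_on:
  assumes "adjoint_sol b1 b2 g r1 r2 sg1 sg2 q a1 a2 T u s i j n p1 p2 p3 p4 p5"
  shows "continuous_on {0..T} p1" "continuous_on {0..T} p2"
  using assms unfolding adjoint_sol_def Let_def
  by (auto intro: continuous_on_backward_integral)

lemma Ham_control_part:
  "Ham b1 b2 g r1 r2 sg1 sg2 q a2 a3 s e i j n p1 p2 p3 p4 p5 w
   = Ham b1 b2 g r1 r2 sg1 sg2 q a2 a3 s e i j n p1 p2 p3 p4 p5 0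
     + (w * (s / n * b1 * i * (p1 - p2)) - a3 / 2 * w\<^sup>2)"
  unfolding Ham_def by (simp add: algebra_simps)

locale seijn_solution =
  fixes b1 b2 g r1 r2 sg1 sg2 q s0 e0 i0 j0 T :: real
    and u s e i j n :: "real \<Rightarrow> real"
  assumes rates_nonneg: "0 \<le> b1" "0 \<le> b2" "0 \<le> g" "0 \<le> r1" "0 \<le> r2" "0 \<le> sg1" "0 \<le> sg2"
    and sigma_sum: "sg1 + sg2 = 1"
    and q_range: "0 \<le> q" "q \<le> 1"
    and init_pos: "0 < s0" "0 < e0" "0 < i0" "0 < j0"
    and init_total: "s0 + e0 + i0 + j0 \<le> 1"
    and horizon: "0 \<le> T"
    and control_range: "\<And>t. t \<in> {0..T} \<Longrightarrow> 0 \<le> u t \<and> u t \<le> 1"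
    and state: "state_sol b1 b2 g r1 r2 sg1 sg2 q s0 e0 i0 j0 T u s e i j n"
begin

definition incidence :: "real \<Rightarrow> real" where
  "incidence t = force b1 b2 (s t) (i t) (j t) (n t) (u t)"

lemma integral_curves:
  "integral_curve T s0 (\<lambda>t. - incidence t) s"
  "integral_curve T e0 (\<lambda>t. incidence t - g * e t) e"
  "integral_curve T i0 (\<lambda>t. sg1 * g * e t - r1 * i t) i"
  "integral_curve T j0 (\<lambda>t. sg2 * g * e t - r2 * j t) j"
  "integral_curve T 1 (\<lambda>t. - q * r2 * j t) n"
  using state unfolding state_sol_def integral_curve_def incidence_def
  by (auto intro!: integrable_neg integrable_diff integrable_on_mult_right)

lemma state_continuous:
  "continuous_on {0..T} s" "continuous_on {0..T} e" "continuous_on {0..T} i"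
  "continuous_on {0..T} j" "continuous_on {0..T} n"
  using integral_curves by (auto intro: integral_curve_continuous_on)

lemma population_balance:
  assumes t: "t \<in> {0..T}"
  shows "n t = 1 - q * (s0 + e0 + i0 + j0) + q * (s t + e t + i t + j t)
                 + q * r1 * integral {0..t} i"
proof -
  have sub: "{0..t} \<subseteq> {0..T}" using t by auto
  have "incidence integrable_on {0..t}" "e integrable_on {0..t}"
    "i integrable_on {0..t}" "j integrable_on {0..t}"
    using state sub unfolding state_sol_def incidence_def by (auto intro: integrable_on_subinterval)
  moreover have "s t = s0 + integral {0..t} (\<lambda>\<tau>. - incidence \<tau>)"
    "e t = e0 + integral {0..t} (\<lambda>\<tau>. incidence \<tau> - g * e \<tau>)"
    "i t = i0 + integral {0..t} (\<lambda>\<tau>. sg1 * g * e \<tau> - r1 * i \<tau>)"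
    "j t = j0 + integral {0..t} (\<lambda>\<tau>. sg2 * g * e \<tau> - r2 * j \<tau>)"
    "n t = 1 + integral {0..t} (\<lambda>\<tau>. - q * r2 * j \<tau>)"
    using integral_curves t unfolding integral_curve_def by auto
  moreover have "g * (sg1 * integral {0..t} e) + g * (sg2 * integral {0..t} e) = g * integral {0..t} e"
    using sigma_sum by (simp flip: distrib_left distrib_right)
  ultimately have balance:
    "s t + e t + i t + j t = s0 + e0 + i0 + j0 - r1 * integral {0..t} i - r2 * integral {0..t} j"
    "n t = 1 - q * r2 * integral {0..t} j"
    by (simp_all add: integral_diff integrable_on_mult_right algebra_simps)
  have "q * (s t + e t + i t + j t)
      = q * (s0 + e0 + i0 + j0) - q * r1 * integral {0..t} i - q * r2 * integral {0..t} j"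
    unfolding balance(1) by (simp add: algebra_simps)
  with balance(2) show ?thesis by linarith
qed

lemma n_pos_if_i_pos:
  assumes t: "t \<in> {0..T}" and "0 < i t"
    and nonneg: "\<And>x. x \<in> {0..t} \<Longrightarrow> 0 \<le> s x \<and> 0 \<le> e x \<and> 0 \<le> i x \<and> 0 \<le> j x"
  shows "0 < n t"
proof -
  have "0 \<le> integral {0..t} i"
    using nonneg t by (intro integral_nonneg integrable_continuous_interval
        continuous_on_subset[OF state_continuous(3)]) auto
  then have "0 \<le> q * r1 * integral {0..t} i"
    using q_range rates_nonneg by simp
  moreover have "q * (s0 + e0 + i0 + j0) \<le> q"
    using q_range init_total mult_left_mono[of _ 1 q] by simp
  moreover have "q * i t \<le> q * (s t + e t + i t + j t)"
    using nonneg[of t] q_range t by (intro mult_left_mono) auto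
  moreover have "0 < 1 - q + q * i t"
    using q_range \<open>0 < i t\<close> by (cases "q = 0") (auto intro: add_nonneg_pos)
  ultimately show ?thesis
    using population_balance[OF t] by simp
qed

definition min_state :: "real \<Rightarrow> real" where
  "min_state t = min (s t) (min (e t) (min (i t) (min (j t) (n t))))"

lemma min_state_continuous: "continuous_on {0..T} min_state"
  unfolding min_state_def by (intro continuous_on_min state_continuous)

lemma s_pos_at_end:
  assumes \<tau>: "0 < \<tau>" "\<tau> \<le> T" and s_before: "\<And>x. x \<in> {0..<\<tau>} \<Longrightarrow> 0 < s x"
    and nonneg: "\<And>x. x \<in> {0..\<tau>} \<Longrightarrow> 0 \<le> s x \<and> 0 \<le> i x \<and> 0 \<le> j x"
    and n_\<tau>: "0 < n \<tau>"
  shows "0 < s \<tau>"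
proof -
  have "\<tau> \<in> {0..T}" "0 < n \<tau> / 2" using \<tau> n_\<tau> by auto
  from state_continuous(5)[unfolded continuous_on_iff, rule_format, OF this]
  obtain d where d: "0 < d"
    and n_near: "\<And>x. x \<in> {0..T} \<Longrightarrow> dist x \<tau> < d \<Longrightarrow> dist (n x) (n \<tau>) < n \<tau> / 2"
    by blast
  have "continuous_on {0..T} (\<lambda>x. b1 * i x + b2 * j x)"
    by (intro continuous_intros state_continuous)
  from continuous_attains_sup[OF compact_Icc _ this] horizon
  obtain M where M: "\<And>x. x \<in> {0..T} \<Longrightarrow> b1 * i x + b2 * j x \<le> M"
    by fastforce
  have "0 \<le> b1 * i \<tau> + b2 * j \<tau>" using nonneg[of \<tau>] rates_nonneg \<tau> by simp
  then have "0 \<le> M" using M[of \<tau>] \<tau> by simp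
  show ?thesis
  proof (rule integral_curve_pos_at_end[OF integral_curves(1) \<tau> s_before _ d])
    show "0 \<le> M / (n \<tau> / 2)" using \<open>0 \<le> M\<close> n_\<tau> by simp
    fix x assume x: "x \<in> {0..\<tau>}" "\<tau> - x < d"
    then have "x \<in> {0..T}" using \<tau> by auto
    then have "\<bar>n x - n \<tau>\<bar> < n \<tau> / 2" using n_near x by (simp add: dist_real_def)
    then have "n \<tau> / 2 \<le> n x" by linarith
    then have "incidence x \<le> s x / (n \<tau> / 2) * (b1 * i x + b2 * j x)"
      unfolding incidence_def using rates_nonneg nonneg[OF x(1)] control_range[OF \<open>x \<in> {0..T}\<close>] n_\<tau>
      by (intro force_le) auto
    also have "\<dots> \<le> s x / (n \<tau> / 2) * M"
      using M[OF \<open>x \<in> {0..T}\<close>] nonneg[OF x(1)] n_\<tau> by (intro mult_left_mono) auto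
    finally show "- (M / (n \<tau> / 2)) * s x \<le> - incidence x" by (simp add: field_simps)
  qed
qed

lemma min_state_pos_at_end:
  assumes \<tau>: "0 < \<tau>" "\<tau> \<le> T" and before: "\<And>x. x \<in> {0..<\<tau>} \<Longrightarrow> 0 < min_state x"
  shows "0 < min_state \<tau>"
proof -
  have pos: "0 < s x" "0 < e x" "0 < i x" "0 < j x" "0 < n x" if "x \<in> {0..<\<tau>}" for x
    using before[OF that] by (auto simp: min_state_def)
  have "0 \<le> min_state \<tau>"
    using \<tau> before
    by (intro nonneg_at_right_end[of 0 \<tau>] continuous_on_subset[OF min_state_continuous]) auto
  then have "0 \<le> min_state x" if "x \<in> {0..\<tau>}" for x
    using that before[of x] by (cases "x = \<tau>") (auto simp: less_imp_le)
  then have nonneg: "0 \<le> s x \<and> 0 \<le> e x \<and> 0 \<le> i x \<and> 0 \<le> j x \<and> 0 \<le> n x"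
    if "x \<in> {0..\<tau>}" for x
    using that by (simp add: min_state_def)
  have incidence_nonneg: "0 \<le> incidence x" if "x \<in> {0..\<tau>}" for x
    using force_nonneg rates_nonneg nonneg[OF that] control_range[of x] \<tau> that
    unfolding incidence_def by auto
  have "0 < e \<tau>"
  proof (rule integral_curve_pos_at_end[OF integral_curves(2) \<tau> pos(2) rates_nonneg(3) zero_less_one])
    fix x assume "x \<in> {0..\<tau>}"
    then show "- g * e x \<le> incidence x - g * e x" using incidence_nonneg by simp
  qed
  have "0 < i \<tau>"
  proof (rule integral_curve_pos_at_end[OF integral_curves(3) \<tau> pos(3) rates_nonneg(4) zero_less_one])
    fix x assume "x \<in> {0..\<tau>}"
    then show "- r1 * i x \<le> sg1 * g * e x - r1 * i x" using nonneg rates_nonneg by simp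
  qed
  have "0 < j \<tau>"
  proof (rule integral_curve_pos_at_end[OF integral_curves(4) \<tau> pos(4) rates_nonneg(5) zero_less_one])
    fix x assume "x \<in> {0..\<tau>}"
    then show "- r2 * j x \<le> sg2 * g * e x - r2 * j x" using nonneg rates_nonneg by simp
  qed
  have "0 < n \<tau>"
    using nonneg \<tau> \<open>0 < i \<tau>\<close> by (intro n_pos_if_i_pos) auto
  then have "0 < s \<tau>"
    using nonneg by (intro s_pos_at_end[OF \<tau> pos(1)]) auto
  show ?thesis
    using \<open>0 < s \<tau>\<close> \<open>0 < e \<tau>\<close> \<open>0 < i \<tau>\<close> \<open>0 < j \<tau>\<close> \<open>0 < n \<tau>\<close> by (simp add: min_state_def)
qed

lemma states_pos:
  assumes "t \<in> {0..T}"
  shows "0 < s t \<and> 0 < e t \<and> 0 < i t \<and> 0 < j t \<and> 0 < n t"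
proof -
  have "0 < min_state 0"
    using integral_curves horizon init_pos by (simp add: integral_curve_def min_state_def)
  with min_state_continuous have "0 < min_state t"
    using min_state_pos_at_end assms by (rule pos_on_interval_first_exit)
  then show ?thesis by (simp add: min_state_def)
qed

end

theorem lemma7:
  fixes b1 b2 g r1 r2 sg1 sg2 q umax a1 a2 a3 T s0 e0 i0 j0 :: real
    and u s e i j n p1 p2 p3 p4 p5 :: "real \<Rightarrow> real"
  assumes params: "b1 > 0" "b2 > 0" "g > 0" "r1 > 0" "r2 > 0"
    and sigma: "sg1 > 0" "sg2 > 0" "sg1 + sg2 = 1"
    and qrange: "0 \<le> q" "q \<le> 1"
    and umax: "0 \<le> umax" "umax < 1"
    and weights: "a1 \<ge> 0" "a2 \<ge> 0" "a3 > 0"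
    and horizon: "T > 0"
    and init: "s0 > 0" "e0 > 0" "i0 > 0" "j0 > 0" "s0 + e0 + i0 + j0 \<le> 1"
    and adm: "admissible umax T u"
    and traj: "state_sol b1 b2 g r1 r2 sg1 sg2 q s0 e0 i0 j0 T u s e i j n"
    and optimal: "\<And>v s' e' i' j' n'. admissible umax T v \<Longrightarrow>
                   state_sol b1 b2 g r1 r2 sg1 sg2 q s0 e0 i0 j0 T v s' e' i' j' n' \<Longrightarrow>
                   cost a1 a2 a3 T u e i j \<le> cost a1 a2 a3 T v e' i' j'"
    and adj: "adjoint_sol b1 b2 g r1 r2 sg1 sg2 q a1 a2 T u s i j n p1 p2 p3 p4 p5"
    and nontriv: "\<exists>t\<in>{0..T}. (p1 t, p2 t, p3 t, p4 t, p5 t) \<noteq> (0, 0, 0, 0, 0)"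
    and maxH: "\<And>t w. t \<in> {0..T} \<Longrightarrow> w \<in> {0..umax} \<Longrightarrow>
                 Ham b1 b2 g r1 r2 sg1 sg2 q a2 a3 (s t) (e t) (i t) (j t) (n t)
                     (p1 t) (p2 t) (p3 t) (p4 t) (p5 t) w
               \<le> Ham b1 b2 g r1 r2 sg1 sg2 q a2 a3 (s t) (e t) (i t) (j t) (n t)
                     (p1 t) (p2 t) (p3 t) (p4 t) (p5 t) (u t)"
  shows "continuous_on {0..T} u"
proof -
  have u_range: "0 \<le> u t \<and> u t \<le> umax" if "t \<in> {0..T}" for t
    using adm that by (simp add: admissible_def)
  then have "0 \<le> u t \<and> u t \<le> 1" if "t \<in> {0..T}" for t
    using umax that by fastforce
  then interpret seijn_solution b1 b2 g r1 r2 sg1 sg2 q s0 e0 i0 j0 T u s e i j n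
    using params sigma qrange init horizon traj by unfold_locales auto
  define c where "c t = s t / n t * b1 * i t * (p1 t - p2 t)" for t
  have "n t \<noteq> 0" if "t \<in> {0..T}" for t
    using states_pos[OF that] by simp
  then have "continuous_on {0..T} c"
    unfolding c_def using adjoint_sol_continuous_on[OF adj]
    by (intro continuous_intros state_continuous) auto
  then have clamp_continuous: "continuous_on {0..T} (\<lambda>t. max 0 (min umax (c t / a3)))"
    using weights(3) by (intro continuous_intros) auto
  have u_eq: "u t = max 0 (min umax (c t / a3))" if t: "t \<in> {0..T}" for t
  proof (rule concave_quadratic_argmax[OF weights(3) umax(1)])
    show "u t \<in> {0..umax}" using u_range[OF t] by simp
    fix w assume "w \<in> {0..umax}"
    from maxH[OF t this] show "w * c t - a3 / 2 * w\<^sup>2 \<le> u t * c t - a3 / 2 * (u t)\<^sup>2"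
      by (subst (asm) (1 2) Ham_control_part) (simp add: c_def)
  qed
  show ?thesis using clamp_continuous by (rule continuous_on_eq) (simp add: u_eq)
qed

end
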